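(* Let $H$ be a nonempty ASC-hypergraph and $M\subseteq H$. Then $M$ is a construct of $H$ if and only if every $M$-antichain misses $H$ and $\bigcup H\in M$.
   Context: A hypergraph is a finite set $H$ of nonempty subsets of some finite set; its carrier is $\bigcup H$. For a family $F$ and set $Y$, $F_Y=\{X\in F\mid X\subseteq Y\}$. A hypergraph partition of $H$ is a partition $\{H_1,\dots,H_n\}$ ($n\ge0$) of the set $H$ with $\{\bigcup H_1,\dots,\bigcup H_n\}$ a partition of $\bigcup H$; $H$ is connected if it has exactly one hypergraph partition; the finest hypergraph partition is the unique one whose blocks are connected. $H$ is atomic if $\{x\}\in H$ for all $x\in\bigcup H$; saturated if $X_1,X_2\in H$ with $X_1\cap X_2\neq\emptyset$ imply $X_1\cup X_2\in H$. An ASC-hypergraph is one that is atomic, saturated and connected. Constructions of an atomic $H$, by induction on $|\bigcup H|$: (0) $\emptyset$ is the only construction of $\emptyset$; (1) if $|\bigcup H|\ge1$, $H$ connected, $x\in\bigcup H$, $K$ a construction of $H_{\bigcup H\setminus\{x\}}$, then $K\cup\{\bigcup H\}$ is a construction of $H$; (2) if $H$ is not connected with finest hypergraph partition $\{H_1,\dots,H_n\}$, $n\ge2$, and $K_i$ is a construction of $H_i$, then $K_1\cup\dots\cup K_n$ is a construction of $H$. A construct of a connected nonempty atomic $H$ is a subset of some construction of $H$ that contains $\bigcup H$. For $M\subseteq H$, an $M$-antichain is a subset $S\subseteq M$ with $|S|\ge2$ such that no member of $S$ is a subset of another member of $S$; it misses $H$ when $\bigcup S\notin H$. *)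

theory Defs
  imports Main
begin

definition hypergraph :: "'a set set \<Rightarrow> bool" where
  "hypergraph H \<longleftrightarrow> finite H \<and> (\<forall>X\<in>H. X \<noteq> {} \<and> finite X)"

definition restr :: "'a set set \<Rightarrow> 'a set \<Rightarrow> 'a set set" where
  "restr F Y = {X \<in> F. X \<subseteq> Y}"

definition hyp_partition :: "'a set set \<Rightarrow> 'a set set set \<Rightarrow> bool" where
  "hyp_partition H P \<longleftrightarrow>
     (\<forall>B\<in>P. B \<noteq> {}) \<and> \<Union>P = H \<and>
     (\<forall>B1\<in>P. \<forall>B2\<in>P. B1 \<noteq> B2 \<longrightarrow> B1 \<inter> B2 = {}) \<and>
     (\<forall>B\<in>P. \<Union>B \<noteq> {}) \<and>
     (\<forall>B1\<in>P. \<forall>B2\<in>P. B1 \<noteq> B2 \<longrightarrow> \<Union>B1 \<inter> \<Union>B2 = {})"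

definition connected_hg :: "'a set set \<Rightarrow> bool" where
  "connected_hg H \<longleftrightarrow> (\<exists>!P. hyp_partition H P)"

definition atomic :: "'a set set \<Rightarrow> bool" where
  "atomic H \<longleftrightarrow> (\<forall>x\<in>\<Union>H. {x} \<in> H)"

definition saturated :: "'a set set \<Rightarrow> bool" where
  "saturated H \<longleftrightarrow> (\<forall>X1\<in>H. \<forall>X2\<in>H. X1 \<inter> X2 \<noteq> {} \<longrightarrow> X1 \<union> X2 \<in> H)"

definition ASC :: "'a set set \<Rightarrow> bool" where
  "ASC H \<longleftrightarrow> atomic H \<and> saturated H \<and> connected_hg H"

(* constructions of an atomic hypergraph H; rule (2) uses the finest hypergraph
   partition P, i.e. the hypergraph partition all of whose blocks are connected *)
inductive construction :: "'a set set \<Rightarrow> 'a set set \<Rightarrow> bool" where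
  empty: "construction {} {}"
| conn: "\<lbrakk> hypergraph H; atomic H; \<Union>H \<noteq> {}; connected_hg H; x \<in> \<Union>H;
           construction (restr H (\<Union>H - {x})) K \<rbrakk>
         \<Longrightarrow> construction H (insert (\<Union>H) K)"
| disconn: "\<lbrakk> hypergraph H; atomic H; \<not> connected_hg H; hyp_partition H P;
              \<forall>B\<in>P. connected_hg B; 2 \<le> card P;
              \<forall>B\<in>P. construction B (f B) \<rbrakk>
         \<Longrightarrow> construction H (\<Union>B\<in>P. f B)"

definition construct :: "'a set set \<Rightarrow> 'a set set \<Rightarrow> bool" where
  "construct H M \<longleftrightarrow> (\<exists>K. construction H K \<and> M \<subseteq> K) \<and> \<Union>H \<in> M"

definition antichain :: "'a set set \<Rightarrow> 'a set set \<Rightarrow> bool" where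
  "antichain M S \<longleftrightarrow> S \<subseteq> M \<and> 2 \<le> card S \<and>
     (\<forall>X\<in>S. \<forall>Y\<in>S. X \<subseteq> Y \<longrightarrow> X = Y)"

definition misses :: "'a set set \<Rightarrow> 'a set set \<Rightarrow> bool" where
  "misses H S \<longleftrightarrow> \<Union>S \<notin> H"

end

theory Submission
  imports Defs
begin

(*
  Soundness: by rule induction, every construction K of a saturated H satisfies
  K \<subseteq> H and all K-antichains miss H; this passes to every subset M of K.

  Completeness: by induction on the size of the carrier, every M \<subseteq> H whose
  antichains miss H extends to a construction.  If H is connected, the members of
  M other than \<Union>H leave some point x of the carrier uncovered (their maximal
  members form an antichain, or there is at most one), and we recurse into H
  restricted to \<Union>H - {x}; otherwise we recurse into the blocks of the finest
  hypergraph partition.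
*)

definition antichains_miss :: "'a set set \<Rightarrow> 'a set set \<Rightarrow> bool" where
  "antichains_miss H M \<longleftrightarrow> (\<forall>S. antichain M S \<longrightarrow> misses H S)"

lemma hypergraph_subset: "hypergraph H \<Longrightarrow> B \<subseteq> H \<Longrightarrow> hypergraph B"
  unfolding hypergraph_def by (auto intro: finite_subset)

lemma restr_subset: "restr H Y \<subseteq> H"
  unfolding restr_def by auto

lemma restr_atomic: "atomic H \<Longrightarrow> atomic (restr H Y)"
  unfolding atomic_def restr_def by auto

lemma restr_saturated: "saturated H \<Longrightarrow> saturated (restr H Y)"
  unfolding saturated_def restr_def by auto

lemma antichain_subset: "antichain M S \<Longrightarrow> S \<subseteq> M"
  unfolding antichain_def by simp

lemma antichain_mono: "antichain M S \<Longrightarrow> M \<subseteq> K \<Longrightarrow> antichain K S"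
  unfolding antichain_def by blast

lemma antichains_miss_mono:
  assumes "antichains_miss H K" "M \<subseteq> K" "H' \<subseteq> H"
  shows "antichains_miss H' M"
  unfolding antichains_miss_def
proof (intro allI impI)
  fix S assume "antichain M S"
  then have "misses H S" using assms(1,2) antichain_mono unfolding antichains_miss_def by blast
  then show "misses H' S" using assms(3) unfolding misses_def by blast
qed

lemma antichain_no_greatest:
  assumes "antichain M S" "X \<in> S"
  shows "\<exists>Y\<in>S. \<not> Y \<subseteq> X"
proof (rule ccontr)
  assume "\<not> ?thesis"
  then have "S \<subseteq> {X}" using assms unfolding antichain_def by blast
  then have "card S \<le> 1" using card_mono[of "{X}" S] by simp
  then show False using assms(1) unfolding antichain_def by simp
qed

lemma Union_maximal_members:
  assumes "finite M"
  shows "\<Union>{X \<in> M. \<forall>Y\<in>M. X \<subseteq> Y \<longrightarrow> X = Y} = \<Union>M"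
proof
  show "\<Union>M \<subseteq> \<Union>{X \<in> M. \<forall>Y\<in>M. X \<subseteq> Y \<longrightarrow> X = Y}"
  proof
    fix z assume "z \<in> \<Union>M"
    then obtain X where X: "X \<in> M" "z \<in> X" by blast
    then obtain Y where "Y \<in> M" "X \<subseteq> Y" "\<forall>Z\<in>M. Y \<subseteq> Z \<longrightarrow> Y = Z"
      using finite_has_maximal2[OF assms] by blast
    then show "z \<in> \<Union>{X \<in> M. \<forall>Y\<in>M. X \<subseteq> Y \<longrightarrow> X = Y}" using X by blast
  qed
qed blast

section \<open>Hypergraph partitions\<close>

lemma partition_Union: "hyp_partition H P \<Longrightarrow> \<Union>P = H"
  unfolding hyp_partition_def by simp

lemma partition_carrier_nonempty: "hyp_partition H P \<Longrightarrow> B \<in> P \<Longrightarrow> \<Union>B \<noteq> {}"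
  unfolding hyp_partition_def by simp

lemma partition_blocks_disjoint:
  "hyp_partition H P \<Longrightarrow> B1 \<in> P \<Longrightarrow> B2 \<in> P \<Longrightarrow> B1 \<noteq> B2 \<Longrightarrow> B1 \<inter> B2 = {}"
  unfolding hyp_partition_def by simp

lemma partition_carriers_disjoint:
  "hyp_partition H P \<Longrightarrow> B1 \<in> P \<Longrightarrow> B2 \<in> P \<Longrightarrow> B1 \<noteq> B2 \<Longrightarrow> \<Union>B1 \<inter> \<Union>B2 = {}"
  unfolding hyp_partition_def by simp

lemma partition_block_subset: "hyp_partition H P \<Longrightarrow> B \<in> P \<Longrightarrow> B \<subseteq> H"
  using partition_Union by blast

lemma partition_block_closed:
  assumes P: "hyp_partition H P" and B: "B \<in> P" and X: "X \<in> H" "X \<noteq> {}" "X \<subseteq> \<Union>B"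
  shows "X \<in> B"
proof -
  obtain B' where B': "B' \<in> P" "X \<in> B'" using X(1) partition_Union[OF P] by blast
  then have "\<Union>B' \<inter> \<Union>B \<noteq> {}" using X(2,3) by blast
  then have "B' = B" using partition_carriers_disjoint[OF P B'(1) B] by blast
  then show ?thesis using B' by simp
qed

lemma partition_block_atomic:
  assumes "hyp_partition H P" "B \<in> P" "atomic H"
  shows "atomic B"
  unfolding atomic_def
proof
  fix x assume x: "x \<in> \<Union>B"
  then have "{x} \<in> H" using partition_block_subset[OF assms(1,2)] assms(3)
    unfolding atomic_def by blast
  then show "{x} \<in> B" using partition_block_closed[OF assms(1,2)] x by blast
qed

lemma partition_block_saturated:
  assumes "hyp_partition H P" "B \<in> P" "saturated H"
  shows "saturated B"
  unfolding saturated_def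
proof (intro ballI impI)
  fix X1 X2 assume X: "X1 \<in> B" "X2 \<in> B" "X1 \<inter> X2 \<noteq> {}"
  then have "X1 \<union> X2 \<in> H" using partition_block_subset[OF assms(1,2)] assms(3)
    unfolding saturated_def by blast
  then show "X1 \<union> X2 \<in> B" using partition_block_closed[OF assms(1,2)] X by blast
qed

lemma partition_finite:
  assumes "hypergraph H" "hyp_partition H P"
  shows "finite P"
proof -
  have "P \<subseteq> Pow H" using partition_block_subset[OF assms(2)] by blast
  moreover have "finite H" using assms(1) unfolding hypergraph_def by simp
  ultimately show ?thesis using finite_subset by blast
qed

lemma partition_singleton: "hypergraph H \<Longrightarrow> H \<noteq> {} \<Longrightarrow> hyp_partition H {H}"
  unfolding hypergraph_def hyp_partition_def by auto

lemma partition_of_empty: "hyp_partition {} P \<longleftrightarrow> P = {}"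
  unfolding hyp_partition_def by auto

lemma connected_empty: "connected_hg {}"
  unfolding connected_hg_def partition_of_empty by auto

lemma connected_iff_trivial_partition:
  assumes "hypergraph H" "H \<noteq> {}"
  shows "connected_hg H \<longleftrightarrow> (\<forall>P. hyp_partition H P \<longrightarrow> P = {H})"
  using partition_singleton[OF assms] unfolding connected_hg_def by blast

text \<open>In a nontrivial partition no block is the whole hypergraph, since the other
  blocks are nonempty and disjoint from it.\<close>

lemma partition_proper_block:
  assumes P: "hyp_partition H P" and nontriv: "P \<noteq> {H}" and B: "B \<in> P"
  shows "B \<subset> H"
proof -
  have "B \<noteq> H"
  proof
    assume BH: "B = H"
    obtain B' where B': "B' \<in> P" "B' \<noteq> B" using nontriv B BH by blast
    then have "B' \<inter> H = {}" using partition_blocks_disjoint[OF P B'(1) B] BH by simp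
    moreover have "B' \<subseteq> H" "\<Union>B' \<noteq> {}"
      using partition_block_subset[OF P B'(1)] partition_carrier_nonempty[OF P B'(1)] by simp_all
    ultimately show False by blast
  qed
  then show ?thesis using partition_block_subset[OF P B] by blast
qed

lemma partition_refine:
  assumes Q: "hyp_partition H Q" and f: "\<And>B. B \<in> Q \<Longrightarrow> hyp_partition B (f B)"
  shows "hyp_partition H (\<Union>B\<in>Q. f B)"
proof -
  have sub: "C \<subseteq> B" if "B \<in> Q" "C \<in> f B" for B C
    using partition_block_subset[OF f] that by blast
  have disj: "C1 \<inter> C2 = {} \<and> \<Union>C1 \<inter> \<Union>C2 = {}"
    if B: "B1 \<in> Q" "B2 \<in> Q" and C: "C1 \<in> f B1" "C2 \<in> f B2" "C1 \<noteq> C2" for B1 B2 C1 C2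
  proof (cases "B1 = B2")
    case True
    then show ?thesis
      using partition_blocks_disjoint[OF f[OF B(1)] C(1) _ C(3)]
        partition_carriers_disjoint[OF f[OF B(1)] C(1) _ C(3)] C(2) by simp
  next
    case False
    then have "B1 \<inter> B2 = {}" "\<Union>B1 \<inter> \<Union>B2 = {}"
      using partition_blocks_disjoint[OF Q B] partition_carriers_disjoint[OF Q B] by simp_all
    moreover have "C1 \<subseteq> B1" "C2 \<subseteq> B2" using sub B C by simp_all
    ultimately show ?thesis by blast
  qed
  have "\<Union>(\<Union>B\<in>Q. f B) = (\<Union>B\<in>Q. \<Union>(f B))" by blast
  also have "\<dots> = H" using partition_Union[OF f] partition_Union[OF Q] by simp
  finally have "\<Union>(\<Union>B\<in>Q. f B) = H" .
  moreover have "\<forall>C\<in>(\<Union>B\<in>Q. f B). C \<noteq> {} \<and> \<Union>C \<noteq> {}"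
    using partition_carrier_nonempty[OF f] by blast
  moreover have "\<forall>C1\<in>(\<Union>B\<in>Q. f B). \<forall>C2\<in>(\<Union>B\<in>Q. f B).
      C1 \<noteq> C2 \<longrightarrow> C1 \<inter> C2 = {} \<and> \<Union>C1 \<inter> \<Union>C2 = {}"
    using disj by blast
  ultimately show ?thesis
    unfolding hyp_partition_def by meson
qed

text \<open>Every hypergraph has a partition into connected blocks (the finest
  hypergraph partition): refine a nontrivial partition blockwise by induction.\<close>

lemma finest_partition_exists:
  "hypergraph H \<Longrightarrow> \<exists>P. hyp_partition H P \<and> (\<forall>B\<in>P. connected_hg B)"
proof (induction "card H" arbitrary: H rule: less_induct)
  case less
  show ?case
  proof (cases "connected_hg H")
    case True
    then show ?thesis
      using partition_singleton[OF less.prems] partition_of_empty by (cases "H = {}") auto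
  next
    case False
    then have ne: "H \<noteq> {}" using connected_empty by blast
    then obtain Q where Q: "hyp_partition H Q" "Q \<noteq> {H}"
      using False connected_iff_trivial_partition[OF less.prems] by blast
    have "\<exists>PB. hyp_partition B PB \<and> (\<forall>C\<in>PB. connected_hg C)" if B: "B \<in> Q" for B
    proof -
      have "B \<subset> H" using partition_proper_block[OF Q B] .
      moreover have "finite H" using less.prems unfolding hypergraph_def by blast
      ultimately show ?thesis
        using less.hyps hypergraph_subset[OF less.prems] psubset_card_mono by blast
    qed
    then obtain f where f: "\<And>B. B \<in> Q \<Longrightarrow> hyp_partition B (f B) \<and> (\<forall>C\<in>f B. connected_hg C)"
      by metis
    then show ?thesis using partition_refine[OF Q(1)] by blast
  qed
qed

lemma finest_partition_card:
  assumes hg: "hypergraph H" and ncon: "\<not> connected_hg H"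
    and P: "hyp_partition H P" and con: "\<forall>B\<in>P. connected_hg B"
  shows "2 \<le> card P"
proof -
  have "H \<noteq> {}" using ncon connected_empty by blast
  then have "P \<noteq> {}" using partition_Union[OF P] by blast
  moreover have "P \<noteq> {B}" for B using ncon con partition_Union[OF P] by auto
  ultimately show ?thesis using partition_finite[OF hg P]
    by (metis One_nat_def card_1_singletonE card_0_eq less_2_cases not_le)
qed

lemma partition_block_carrier_psubset:
  assumes P: "hyp_partition H P" and B: "B \<in> P" and two: "2 \<le> card P"
  shows "\<Union>B \<subset> \<Union>H"
proof -
  have "finite P" using two card.infinite by fastforce
  then have "\<not> (\<forall>B1\<in>P. \<forall>B2\<in>P. B1 = B2)" using two card_le_Suc0_iff_eq by fastforce
  then obtain B' where B': "B' \<in> P" "B' \<noteq> B" using B by blast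
  then have "\<Union>B' \<noteq> {}" "\<Union>B' \<inter> \<Union>B = {}" "\<Union>B' \<subseteq> \<Union>H"
    using partition_carrier_nonempty[OF P] partition_carriers_disjoint[OF P B'(1) B]
      partition_block_subset[OF P] by blast+
  moreover have "\<Union>B \<subseteq> \<Union>H" using partition_block_subset[OF P B] by blast
  ultimately show ?thesis by blast
qed

text \<open>A connected, atomic, saturated nonempty hypergraph contains its carrier:
  otherwise a maximal member Y and the members not inside Y would split H.\<close>

lemma connected_carrier_mem:
  assumes hg: "hypergraph H" and at: "atomic H" and sat: "saturated H"
    and con: "connected_hg H" and ne: "H \<noteq> {}"
  shows "\<Union>H \<in> H"
proof (rule ccontr)
  assume nin: "\<Union>H \<notin> H"
  obtain Y where Y: "Y \<in> H" "\<forall>Z\<in>H. Y \<subseteq> Z \<longrightarrow> Y = Z"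
    using ne finite_has_maximal[of H] hg unfolding hypergraph_def by blast
  have "Y \<subseteq> \<Union>H" "Y \<noteq> \<Union>H" using Y(1) nin by blast+
  then obtain x where x: "x \<in> \<Union>H" "x \<notin> Y" by blast
  define A where "A = restr H Y"
  define C where "C = H - A"
  have YA: "Y \<in> A" using Y(1) unfolding A_def restr_def by simp
  have xC: "{x} \<in> C" using x at unfolding A_def C_def restr_def atomic_def by auto
  have "\<Union>C \<inter> Y = {}"
  proof (rule ccontr)
    assume "\<Union>C \<inter> Y \<noteq> {}"
    then obtain Z where Z: "Z \<in> H" "\<not> Z \<subseteq> Y" "Z \<inter> Y \<noteq> {}"
      unfolding C_def A_def restr_def by blast
    then have "Z \<union> Y \<in> H" using sat Y(1) unfolding saturated_def by blast
    then show False using Y(2) Z(2) by blast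
  qed
  moreover have "\<Union>A = Y" "Y \<noteq> {}"
    using YA Y(1) hg unfolding A_def restr_def hypergraph_def by auto
  moreover have AC: "A \<noteq> C" "A \<inter> C = {}" "A \<union> C = H"
    using YA unfolding C_def A_def restr_def by auto
  moreover have "\<Union>C \<noteq> {}" "A \<noteq> {}" "C \<noteq> {}" using xC YA by blast+
  ultimately have "hyp_partition H {A, C}"
    unfolding hyp_partition_def by (auto simp: Int_commute)
  then have "{A, C} = {H}"
    using con connected_iff_trivial_partition[OF hg ne] by blast
  then have "A = H" "C = H" by auto
  then show False using AC(1) by simp
qed

section \<open>Soundness: constructions satisfy the antichain condition\<close>

text \<open>Constructions of a saturated hypergraph consist of members of it; in the
  connected step this uses that the carrier itself is a member.\<close>

lemma construction_subset: "construction H K \<Longrightarrow> saturated H \<Longrightarrow> K \<subseteq> H"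
proof (induction rule: construction.induct)
  case (conn H x K)
  then show ?case
    using connected_carrier_mem restr_saturated restr_subset by blast
next
  case (disconn H P f)
  then show ?case using partition_block_saturated partition_block_subset by blast
qed simp

lemma construction_antichains_miss:
  "construction H K \<Longrightarrow> saturated H \<Longrightarrow> antichains_miss H K"
proof (induction rule: construction.induct)
  case empty
  then show ?case unfolding antichains_miss_def antichain_def by auto
next
  case (conn H x K)
  let ?H' = "restr H (\<Union>H - {x})"
  have KH': "K \<subseteq> ?H'" and IH: "antichains_miss ?H' K"
    using conn construction_subset restr_saturated by blast+
  show ?case
    unfolding antichains_miss_def
  proof (intro allI impI)
    fix S assume S: "antichain (insert (\<Union>H) K) S"
    \<comment> \<open>the top element \<Union>H cannot lie in an antichain, since it contains all others\<close>
    have "S \<subseteq> insert (\<Union>H) K" using antichain_subset[OF S] .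
    then have "\<forall>Y\<in>S. Y \<subseteq> \<Union>H" using KH' restr_subset by blast
    then have "\<Union>H \<notin> S" using antichain_no_greatest[OF S] by blast
    then have SK: "antichain K S" using S unfolding antichain_def by blast
    then have "\<Union>S \<notin> ?H'" using IH unfolding antichains_miss_def misses_def by blast
    moreover have "\<Union>S \<subseteq> \<Union>H - {x}"
      using antichain_subset[OF SK] KH' unfolding restr_def by blast
    ultimately show "misses H S" unfolding misses_def restr_def by blast
  qed
next
  case (disconn H P f)
  have sub: "f B \<subseteq> B" and IH: "antichains_miss B (f B)" if "B \<in> P" for B
    using disconn that partition_block_saturated construction_subset by blast+
  show ?case
    unfolding antichains_miss_def misses_def
  proof (intro allI impI notI)
    fix S assume S: "antichain (\<Union>B\<in>P. f B) S" and US: "\<Union>S \<in> H"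
    obtain B0 where B0: "B0 \<in> P" "\<Union>S \<in> B0"
      using US partition_Union[OF disconn(4)] by blast
    \<comment> \<open>all members of S lie in the block of \<Union>S, hence come from its construction\<close>
    have "S \<subseteq> f B0"
    proof
      fix X assume X: "X \<in> S"
      then obtain B where B: "B \<in> P" "X \<in> f B" using antichain_subset[OF S] by blast
      then have "X \<in> H" "X \<noteq> {}"
        using sub partition_block_subset[OF disconn(4)] disconn(1) unfolding hypergraph_def by blast+
      then have "X \<in> B0" using partition_block_closed[OF disconn(4) B0(1)] X B0(2) by blast
      then have "B = B0" using partition_blocks_disjoint[OF disconn(4) B(1) B0(1)] B sub by blast
      then show "X \<in> f B0" using B by simp
    qed
    then have "antichain (f B0) S" using S unfolding antichain_def by simp
    then show False using IH[OF B0(1)] B0(2) unfolding antichains_miss_def misses_def by blast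
  qed
qed

section \<open>Completeness: the antichain condition yields a construction\<close>

lemma uncovered_point:
  assumes "finite M" "M \<subseteq> H" "antichains_miss H M" "\<Union>H \<in> H" "\<Union>H \<noteq> {}"
  shows "\<exists>x\<in>\<Union>H. x \<notin> \<Union>(M - {\<Union>H})"
proof -
  define M' where "M' = M - {\<Union>H}"
  define Mx where "Mx = {X \<in> M'. \<forall>Y\<in>M'. X \<subseteq> Y \<longrightarrow> X = Y}"
  have fin: "finite Mx" "finite M'" using assms(1) unfolding Mx_def M'_def by simp_all
  have "\<Union>Mx \<noteq> \<Union>H"
  proof (cases "2 \<le> card Mx")
    case True
    moreover have "Mx \<subseteq> M" "\<forall>X\<in>Mx. \<forall>Y\<in>Mx. X \<subseteq> Y \<longrightarrow> X = Y"
      unfolding Mx_def M'_def by blast+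
    ultimately have "antichain M Mx" unfolding antichain_def by simp
    then show ?thesis using assms(3,4) unfolding antichains_miss_def misses_def by metis
  next
    case False
    then consider "Mx = {}" | X where "Mx = {X}"
      using fin(1) by (metis One_nat_def card_1_singletonE card_0_eq less_2_cases not_le)
    then show ?thesis
    proof cases
      case 2
      then have "X \<in> M'" unfolding Mx_def by blast
      then show ?thesis using 2 unfolding M'_def by auto
    qed (use assms(5) in simp)
  qed
  moreover have "\<Union>Mx = \<Union>M'" unfolding Mx_def using Union_maximal_members[OF fin(2)] .
  moreover have "\<Union>M' \<subseteq> \<Union>H" using assms(2) unfolding M'_def by blast
  ultimately show ?thesis unfolding M'_def by blast
qed

lemma construction_exists:
  "hypergraph H \<Longrightarrow> atomic H \<Longrightarrow> saturated H \<Longrightarrow> M \<subseteq> H \<Longrightarrow> antichains_miss H M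
   \<Longrightarrow> \<exists>K. construction H K \<and> M \<subseteq> K"
proof (induction "card (\<Union>H)" arbitrary: H M rule: less_induct)
  case less
  note hg = less.prems(1) and at = less.prems(2) and sat = less.prems(3)
    and MH = less.prems(4) and miss = less.prems(5)
  have finU: "finite (\<Union>H)" using hg unfolding hypergraph_def by blast
  have IH: "\<exists>K. construction H' K \<and> M' \<subseteq> K"
    if "H' \<subseteq> H" "\<Union>H' \<subset> \<Union>H" "atomic H'" "saturated H'" "M' \<subseteq> H'" "antichains_miss H' M'"
    for H' M'
    using less.hyps[OF psubset_card_mono[OF finU that(2)] hypergraph_subset[OF hg that(1)] that(3-6)] .
  consider "H = {}" | "H \<noteq> {}" "connected_hg H" | "\<not> connected_hg H"
    using connected_empty by blast
  then show ?case
  proof cases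
    case 1
    then show ?thesis using MH construction.empty by blast
  next
    case 2
    have top: "\<Union>H \<in> H" using connected_carrier_mem[OF hg at sat 2(2,1)] .
    have Une: "\<Union>H \<noteq> {}" using 2(1) hg unfolding hypergraph_def by blast
    have "finite M" using finite_subset[OF MH] hg unfolding hypergraph_def by blast
    then obtain x where x: "x \<in> \<Union>H" "x \<notin> \<Union>(M - {\<Union>H})"
      using uncovered_point[OF _ MH miss top Une] by blast
    define H' where "H' = restr H (\<Union>H - {x})"
    have sub': "H' \<subseteq> H" "M - {\<Union>H} \<subseteq> H'"
      using MH x restr_subset unfolding H'_def restr_def by blast+
    have smaller: "\<Union>H' \<subset> \<Union>H" using x unfolding H'_def restr_def by blast
    have miss': "antichains_miss H' (M - {\<Union>H})"
      using antichains_miss_mono[OF miss _ sub'(1)] by blast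
    obtain K' where K': "construction H' K'" "M - {\<Union>H} \<subseteq> K'"
      using IH[OF sub'(1) smaller _ _ sub'(2) miss'] restr_atomic[OF at] restr_saturated[OF sat]
      unfolding H'_def by blast
    have "construction H (insert (\<Union>H) K')"
      using construction.conn[OF hg at Une 2(2) x(1)] K'(1) unfolding H'_def .
    then show ?thesis using K'(2) by blast
  next
    case 3
    obtain P where P: "hyp_partition H P" "\<forall>B\<in>P. connected_hg B"
      using finest_partition_exists[OF hg] by blast
    have c2: "2 \<le> card P" using finest_partition_card[OF hg 3 P] .
    have "\<exists>K. construction B K \<and> M \<inter> B \<subseteq> K" if B: "B \<in> P" for B
    proof -
      have "antichains_miss B (M \<inter> B)"
        using antichains_miss_mono[OF miss _ partition_block_subset[OF P(1) B]] by blast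
      then show ?thesis
        using IH[OF partition_block_subset[OF P(1) B] partition_block_carrier_psubset[OF P(1) B c2]
            partition_block_atomic[OF P(1) B at] partition_block_saturated[OF P(1) B sat]]
        by blast
    qed
    then obtain f where f: "\<And>B. B \<in> P \<Longrightarrow> construction B (f B) \<and> M \<inter> B \<subseteq> f B" by metis
    then have "construction H (\<Union>B\<in>P. f B)"
      using construction.disconn[OF hg at 3 P c2] by blast
    moreover have "M \<subseteq> (\<Union>B\<in>P. f B)" using f MH partition_Union[OF P(1)] by blast
    ultimately show ?thesis by blast
  qed
qed

theorem proposition6p13:
  fixes H M :: "'a set set"
  assumes "hypergraph H" and "H \<noteq> {}" and "ASC H" and "M \<subseteq> H"
  shows "construct H M \<longleftrightarrow> (\<forall>S. antichain M S \<longrightarrow> misses H S) \<and> \<Union>H \<in> M"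
proof -
  have at: "atomic H" and sat: "saturated H" using assms(3) unfolding ASC_def by blast+
  have "antichains_miss H M \<longleftrightarrow> (\<exists>K. construction H K \<and> M \<subseteq> K)"
  proof
    assume "antichains_miss H M"
    then show "\<exists>K. construction H K \<and> M \<subseteq> K"
      using construction_exists[OF assms(1) at sat assms(4)] by blast
  next
    assume "\<exists>K. construction H K \<and> M \<subseteq> K"
    then show "antichains_miss H M"
      using construction_antichains_miss[OF _ sat] antichains_miss_mono by blast
  qed
  then show ?thesis unfolding construct_def antichains_miss_def by blast
qed

end
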